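(* Let $\gamma$ be a smooth, convex closed curve in the Euclidean plane with curvature $\kappa>0$, which is a Gutkin curve with contact angle $\alpha$, and let $x(t),y(t)$ be the corresponding chord parameterizations, where $x,y$ denote arc-length coordinates on $\gamma$ and $'$ denotes $d/dt$. Then along this family of chords $\kappa(x(t))\,x'(t)=\kappa(y(t))\,y'(t)$; equivalently, if the parameter $t$ is chosen so that $x'(t)=a/\kappa(x(t))$ for a constant $a$, then also $y'(t)=a/\kappa(y(t))$, so that the values of this parameter at the two endpoints of each chord differ by a constant.
   Context: A smooth convex oriented closed curve $C$ in $\mathbb{E}^2$ is a Gutkin curve with contact angle $\alpha\in(0,\pi]$ if there are parameterizations $x(t),y(t)$ of $C$ with $x'(t),y'(t)>0$, $x(t)\neq y(t)$, such that for every $t$ the angle at $x(t)$ between the positively oriented tangent of $C$ and the chord direction towards $y(t)$, and the angle at $y(t)$ between the chord direction (from $x(t)$ towards $y(t)$) and the positively oriented tangent of $C$, both equal $\alpha$. *)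

theory Defs
  imports "HOL-Analysis.Analysis"
begin

text \<open>The Euclidean plane is modelled by the complex numbers.\<close>

definition vderiv :: "(real \<Rightarrow> complex) \<Rightarrow> real \<Rightarrow> complex" where
  "vderiv f = (\<lambda>s. vector_derivative f (at s))"

definition smooth_plane_curve :: "(real \<Rightarrow> complex) \<Rightarrow> bool" where
  "smooth_plane_curve g \<longleftrightarrow> (\<forall>n s. ((vderiv ^^ n) g) differentiable (at s))"

definition vec_angle :: "complex \<Rightarrow> complex \<Rightarrow> real" where
  "vec_angle u v = arccos (inner u v / (norm u * norm v))"

text \<open>Signed curvature of a planar curve parameterized by arc length
  (counterclockwise turning is positive).\<close>
definition curvature :: "(real \<Rightarrow> complex) \<Rightarrow> real \<Rightarrow> real" where
  "curvature g s = Im (cnj (vderiv g s) * vderiv (vderiv g) s)"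

definition convex_arclength_curve :: "(real \<Rightarrow> complex) \<Rightarrow> real \<Rightarrow> bool" where
  "convex_arclength_curve g L \<longleftrightarrow>
     L > 0 \<and> smooth_plane_curve g \<and>
     (\<forall>s. g (s + L) = g s) \<and>
     inj_on g {0..<L} \<and>
     (\<forall>s. norm (vderiv g s) = 1) \<and>
     (\<exists>K. convex K \<and> compact K \<and> interior K \<noteq> {} \<and> g ` {0..L} = frontier K)"

definition gutkin_pair ::
  "(real \<Rightarrow> complex) \<Rightarrow> real \<Rightarrow> (real \<Rightarrow> real) \<Rightarrow> (real \<Rightarrow> real) \<Rightarrow> bool" where
  "gutkin_pair g \<alpha> x y \<longleftrightarrow>
     0 < \<alpha> \<and> \<alpha> \<le> pi \<and>
     (\<forall>t. x differentiable (at t) \<and> y differentiable (at t)) \<and>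
     (\<forall>t. deriv x t > 0 \<and> deriv y t > 0) \<and>
     g ` range x = range g \<and> g ` range y = range g \<and>
     (\<forall>t. g (x t) \<noteq> g (y t)) \<and>
     (\<forall>t. vec_angle (vderiv g (x t)) (g (y t) - g (x t)) = \<alpha>) \<and>
     (\<forall>t. vec_angle (g (y t) - g (x t)) (vderiv g (y t)) = \<alpha>)"

end

theory Submission
  imports Defs
begin

text \<open>Write T for the unit tangent of the arc-length parameterized curve, viewed as a
  complex number. Both contact angles equal \<alpha>, so after rotating by the chord direction
  u both cnj T(x) u and cnj u T(y) are unit numbers with real part cos \<alpha>. Hence
  w = cnj T(x) T(y) takes values in a finite set, and being continuous it is constant.
  Since T' = i \<kappa> T, differentiating w gives 0 = w' = i (\<kappa>(y) y' - \<kappa>(x) x') w,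
  and w \<noteq> 0 yields \<kappa>(x) x' = \<kappa>(y) y'.\<close>

lemma finite_unit_Re: "finite {z::complex. Re z = c \<and> norm z = 1}"
proof (rule finite_subset)
  show "{z::complex. Re z = c \<and> norm z = 1}
      \<subseteq> {Complex c (sqrt (1 - c\<^sup>2)), Complex c (- sqrt (1 - c\<^sup>2))}"
  proof
    fix z :: complex assume "z \<in> {z. Re z = c \<and> norm z = 1}"
    then have re: "Re z = c" and "Re z ^ 2 + Im z ^ 2 = 1" by (auto simp: cmod_def)
    then have "Im z ^ 2 = 1 - c\<^sup>2" by simp
    then have "\<bar>Im z\<bar> = sqrt (1 - c\<^sup>2)" using real_sqrt_abs[of "Im z"] by simp
    then show "z \<in> {Complex c (sqrt (1 - c\<^sup>2)), Complex c (- sqrt (1 - c\<^sup>2))}"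
      using re by (cases "Im z \<ge> 0") (auto simp: complex_eq_iff)
  qed
qed simp

lemma has_vector_derivative_finite_range_eq_0:
  fixes w :: "real \<Rightarrow> 'a::real_normed_vector"
  assumes deriv: "(w has_vector_derivative D) (at t0)"
    and "finite F" and range: "\<And>t. w t \<in> F"
  shows "D = 0"
proof -
  have "open (- (F - {w t0}))" using \<open>finite F\<close> by (intro open_Compl finite_imp_closed) auto
  then have "eventually (\<lambda>t. w t \<in> - (F - {w t0})) (at t0)"
    using has_vector_derivative_continuous[OF deriv] by (auto simp: isCont_def tendsto_def)
  then obtain e where "e > 0" and e: "\<And>t. t \<noteq> t0 \<Longrightarrow> dist t t0 < e \<Longrightarrow> w t \<notin> F - {w t0}"
    unfolding eventually_at by auto
  have locally_const: "w t0 = w t" if "dist t t0 < e" for t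
    using e[OF _ that] range[of t] by (cases "t = t0") auto
  have "(w has_vector_derivative 0) (at t0)"
    using has_vector_derivative_transform_within[OF _ \<open>e > 0\<close>, of "\<lambda>_. w t0" 0 t0 UNIV w]
      locally_const by auto
  then show ?thesis using deriv vector_derivative_unique_at by auto
qed

lemma cos_vec_angle:
  assumes "u \<noteq> 0" "v \<noteq> 0"
  shows "cos (vec_angle u v) = inner u v / (norm u * norm v)"
proof -
  have "\<bar>inner u v\<bar> \<le> norm u * norm v" by (rule Cauchy_Schwarz_ineq2)
  then have "\<bar>inner u v / (norm u * norm v)\<bar> \<le> 1"
    using assms by (simp add: divide_simps abs_mult)
  then show ?thesis unfolding vec_angle_def by (simp add: cos_arccos_abs)
qed

lemma cnj_mult_mem_products_if_equal_angles:
  fixes T1 T2 c :: complex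
  assumes "norm T1 = 1" "norm T2 = 1" "c \<noteq> 0"
    and "vec_angle T1 c = \<alpha>" "vec_angle c T2 = \<alpha>"
  defines "S \<equiv> {z::complex. Re z = cos \<alpha> \<and> norm z = 1}"
  shows "cnj T1 * T2 \<in> (\<lambda>(a, b). a * b) ` (S \<times> S)"
proof -
  define u where "u = c / of_real (norm c)"
  have "T1 \<noteq> 0" "T2 \<noteq> 0" "norm u = 1" using assms(1-3) by (auto simp: u_def norm_divide)
  then have "Re (cnj T1 * u) = cos \<alpha>" "Re (cnj u * T2) = cos \<alpha>"
    using assms cos_vec_angle[of T1 c] cos_vec_angle[of c T2]
    by (simp_all add: u_def inner_complex_def Re_divide_of_real add_divide_distrib)
  then have "cnj T1 * u \<in> S" "cnj u * T2 \<in> S"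
    using assms(1,2) \<open>norm u = 1\<close> by (simp_all add: S_def norm_mult)
  moreover have "u * cnj u = 1" using \<open>norm u = 1\<close> complex_norm_square[of u] by simp
  then have "cnj T1 * T2 = (cnj T1 * u) * (cnj u * T2)" by (simp add: algebra_simps)
  ultimately show ?thesis by (intro rev_image_eqI[of "(cnj T1 * u, cnj u * T2)"]) auto
qed

text \<open>The last hypothesis says that the derivative of cnj a * b vanishes.\<close>
lemma Im_cnj_mult_eq_if_unit_product_stationary:
  fixes a b da db :: complex
  assumes "norm a = 1" "norm b = 1" "cnj a * db + cnj da * b = 0"
  shows "Im (cnj a * da) = Im (cnj b * db)"
proof -
  have unit: "a * cnj a = 1" "b * cnj b = 1"
    using assms(1,2) complex_norm_square[of a] complex_norm_square[of b] by simp_all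
  have "0 = a * cnj b * (cnj a * db + cnj da * b)" using assms(3) by simp
  also have "\<dots> = (a * cnj a) * (cnj b * db) + (b * cnj b) * cnj (cnj a * da)"
    by (simp add: algebra_simps)
  also have "\<dots> = cnj b * db + cnj (cnj a * da)" using unit by simp
  finally have "Im (cnj b * db + cnj (cnj a * da)) = 0" by simp
  then show ?thesis by simp
qed

lemma has_vector_derivative_tangent_comp:
  assumes "smooth_plane_curve g" "z differentiable (at t)"
  shows "((\<lambda>t. vderiv g (z t)) has_vector_derivative deriv z t *\<^sub>R vderiv (vderiv g) (z t)) (at t)"
proof -
  have "((vderiv ^^ 1) g) differentiable (at (z t))"
    using assms(1) unfolding smooth_plane_curve_def by blast
  then have "(vderiv g has_vector_derivative vderiv (vderiv g) (z t)) (at (z t))"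
    by (simp add: vderiv_def vector_derivative_works[symmetric])
  moreover have "(z has_vector_derivative deriv z t) (at t)"
    using assms(2) by (simp add: DERIV_deriv_iff_real_differentiable
        flip: has_real_derivative_iff_has_vector_derivative)
  ultimately show ?thesis using vector_diff_chain_at[of z _ t "vderiv g"] by (simp add: o_def)
qed

lemma curvature_mult_deriv_eq_if_equal_contact_angles:
  fixes g :: "real \<Rightarrow> complex" and x y :: "real \<Rightarrow> real"
  assumes g: "smooth_plane_curve g" and unit: "\<And>s. norm (vderiv g s) = 1"
    and diff: "\<And>t. x differentiable (at t)" "\<And>t. y differentiable (at t)"
    and chord: "\<And>t. g (x t) \<noteq> g (y t)"
    and angle_x: "\<And>t. vec_angle (vderiv g (x t)) (g (y t) - g (x t)) = \<alpha>"
    and angle_y: "\<And>t. vec_angle (g (y t) - g (x t)) (vderiv g (y t)) = \<alpha>"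
  shows "curvature g (x t) * deriv x t = curvature g (y t) * deriv y t"
proof -
  define S where "S = {z::complex. Re z = cos \<alpha> \<and> norm z = 1}"
  define w where "w = (\<lambda>t. cnj (vderiv g (x t)) * vderiv g (y t))"
  define D1 where "D1 = deriv x t *\<^sub>R vderiv (vderiv g) (x t)"
  define D2 where "D2 = deriv y t *\<^sub>R vderiv (vderiv g) (y t)"
  have "(w has_vector_derivative cnj (vderiv g (x t)) * D2 + cnj D1 * vderiv g (y t)) (at t)"
    unfolding w_def D1_def D2_def
    by (intro has_vector_derivative_mult has_vector_derivative_cnj
        has_vector_derivative_tangent_comp g diff)
  moreover have "finite ((\<lambda>(a, b). a * b) ` (S \<times> S))"
    unfolding S_def using finite_unit_Re by auto
  moreover have "w s \<in> (\<lambda>(a, b). a * b) ` (S \<times> S)" for s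
    unfolding w_def S_def
    using chord[of s] by (intro cnj_mult_mem_products_if_equal_angles[OF unit unit _ angle_x angle_y]) auto
  ultimately have "cnj (vderiv g (x t)) * D2 + cnj D1 * vderiv g (y t) = 0"
    by (rule has_vector_derivative_finite_range_eq_0)
  then have "Im (cnj (vderiv g (x t)) * D1) = Im (cnj (vderiv g (y t)) * D2)"
    by (intro Im_cnj_mult_eq_if_unit_product_stationary unit)
  then show ?thesis
    by (simp add: D1_def D2_def curvature_def scaleR_conv_of_real algebra_simps)
qed

theorem mainTheorem3:
  fixes g :: "real \<Rightarrow> complex" and L \<alpha> :: real and x y :: "real \<Rightarrow> real"
  assumes "convex_arclength_curve g L"
    and "\<forall>s. curvature g s > 0"
    and "gutkin_pair g \<alpha> x y"
  shows "(\<forall>t. curvature g (x t) * deriv x t = curvature g (y t) * deriv y t) \<and>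
         (\<forall>a. (\<forall>t. deriv x t = a / curvature g (x t)) \<longrightarrow>
              (\<forall>t. deriv y t = a / curvature g (y t)))"
proof -
  have key: "curvature g (x t) * deriv x t = curvature g (y t) * deriv y t" for t
    using assms(1,3) unfolding convex_arclength_curve_def gutkin_pair_def
    by (intro curvature_mult_deriv_eq_if_equal_contact_angles) auto
  moreover have "deriv y t = a / curvature g (y t)"
    if "\<forall>t. deriv x t = a / curvature g (x t)" for a t
  proof -
    have "curvature g (x t) \<noteq> 0" "curvature g (y t) \<noteq> 0"
      using assms(2) by (metis less_irrefl)+
    then show ?thesis using that key[of t] by (simp add: field_simps)
  qed
  ultimately show ?thesis by blast
qed

end
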